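(* Let $a,b\in\mathbb{Z}$ with $a<b$, $\mathbf{x}\in\mathbb{Z}^m$ with $x_1\le\dots\le x_m$, and $\mathbf{y}\in(\mathbb{Z}')^n$ with $y_1\le\dots\le y_n$, where $\mathbb{Z}'=\mathbb{Z}+1/2$. Let $\mathbf{X}=(X_1,\dots,X_m)$ be an $m$-dimensional simple coalescing random walk on $\mathbb{Z}$ started at $\mathbf{x}$ and absorbed at $a$ and at $b$, and let $\mathbf{Y}=(Y_1,\dots,Y_n)$ be an $n$-dimensional simple coalescing random walk on $\mathbb{Z}'$ started at $\mathbf{y}$ and reflected at $a$ and $b$. Put $I^{\rightarrow}_{ij}(t,\mathbf{y})=1_{]y_j,y_{j+1}]}(X_i(t))$ and $I^{\leftarrow}_{ij}(t,\mathbf{x})=1_{]Y_j(t),Y_{j+1}(t)]}(x_i)$ for $1\le i\le m$, $1\le j\le n-1$. Then for each $t\ge0$ the joint distribution of the $m\times(n-1)$ random array $(I^{\rightarrow}_{ij}(t,\mathbf{Y}(0)))$ coincides with that of $(I^{\leftarrow}_{ij}(t,\mathbf{X}(0)))$.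
   Context: A simple coalescing random walk on $\mathbb{Z}$ (resp. $\mathbb{Z}'$) is a system of particles indexed $1,\dots,m$ in increasing order of initial positions, each free particle performing a continuous-time symmetric simple random walk jumping at total rate one (rate $1/2$ to each neighbour), independently, except that particles that occupy the same site coalesce and move together thereafter. Absorbed at $a$ and $b$: a particle that hits $a$ or $b$ stays there forever (it no longer jumps). Reflected at $a$ (for the walk on $\mathbb{Z}'$): each particle stays on the same side of $a$; a particle at $a-1/2$ jumps to $a-3/2$ at rate $1/2$ and its jump to the right is suppressed (it stays), and symmetrically a particle at $a+1/2$ jumps to $a+3/2$ at rate $1/2$ and its jump to the left is suppressed; otherwise it moves as a simple coalescing random walk. Reflection at two points $a<b$ is defined analogously at each point. *)

theory Defs
  imports "HOL-Probability.Probability"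
begin

text \<open>
  Continuous-time coalescing random walks with bounded jump rates are encoded by
  uniformization: the law at time t of a Markov chain whose generator is
  lam * (K - Id), with K a jump kernel, is
  sum over k of Poisson(lam t){k} times K^k (the matrix exponential exp(t Q)).
  Each of the m particle indices carries a rate-one clock; when the clock of index i
  rings, the cluster containing i (all particles at the same site) moves, but only if
  i is the least index of that cluster.  Hence each cluster jumps at total rate one,
  rate 1/2 to each neighbour, independently of other clusters.
\<close>

fun kernel_power :: "('s \<Rightarrow> 's pmf) \<Rightarrow> nat \<Rightarrow> 's \<Rightarrow> 's pmf" where
  "kernel_power K 0 s = return_pmf s"
| "kernel_power K (Suc k) s = bind_pmf (K s) (kernel_power K k)"

definition uniformized_law :: "real \<Rightarrow> ('s \<Rightarrow> 's pmf) \<Rightarrow> real \<Rightarrow> 's \<Rightarrow> 's pmf" where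
  "uniformized_law lam K t s =
     (if 0 < lam * t then bind_pmf (poisson_pmf (lam * t)) (\<lambda>k. kernel_power K k s)
      else return_pmf s)"

definition cluster_leader :: "'a list \<Rightarrow> nat \<Rightarrow> bool" where
  "cluster_leader xs i \<longleftrightarrow> (\<forall>j<i. xs ! j \<noteq> xs ! i)"

definition move_cluster :: "'a list \<Rightarrow> nat \<Rightarrow> 'a \<Rightarrow> 'a list" where
  "move_cluster xs i q = map (\<lambda>z. if z = xs ! i then q else z) xs"

definition crw_step :: "('a \<Rightarrow> int \<Rightarrow> 'a) \<Rightarrow> 'a list \<Rightarrow> 'a list pmf" where
  "crw_step jump xs =
     (if xs = [] then return_pmf xs else
      bind_pmf (pmf_of_set {0..<length xs}) (\<lambda>i.
      bind_pmf (pmf_of_set {-1, 1 :: int}) (\<lambda>d.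
        return_pmf (if cluster_leader xs i
                    then move_cluster xs i (jump (xs ! i) d) else xs))))"

definition crw_law :: "('a \<Rightarrow> int \<Rightarrow> 'a) \<Rightarrow> real \<Rightarrow> 'a list \<Rightarrow> 'a list pmf" where
  "crw_law jump t xs = uniformized_law (real (length xs)) (crw_step jump) t xs"

definition absorbed_jump :: "int \<Rightarrow> int \<Rightarrow> int \<Rightarrow> int \<Rightarrow> int" where
  "absorbed_jump a b x d = (if x = a \<or> x = b then x else x + d)"

text \<open>Single-site dynamics on Z' = Z + 1/2 (positions as reals) reflected at a and b:
  a jump that would cross a or b is suppressed.\<close>
definition reflected_jump :: "int \<Rightarrow> int \<Rightarrow> real \<Rightarrow> int \<Rightarrow> real" where
  "reflected_jump a b y d =
     (let y' = y + of_int d in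
      if (y < of_int a) \<noteq> (y' < of_int a) \<or> (y < of_int b) \<noteq> (y' < of_int b) then y else y')"

definition absorbed_crw_law :: "int \<Rightarrow> int \<Rightarrow> real \<Rightarrow> int list \<Rightarrow> int list pmf" where
  "absorbed_crw_law a b t xs = crw_law (absorbed_jump a b) t xs"

definition reflected_crw_law :: "int \<Rightarrow> int \<Rightarrow> real \<Rightarrow> real list \<Rightarrow> real list pmf" where
  "reflected_crw_law a b t ys = crw_law (reflected_jump a b) t ys"

text \<open>The m x (n-1) array I_ij = 1_{]y_j, y_(j+1)]}(x_i) (0-based indices, as booleans).\<close>
definition interval_array :: "int list \<Rightarrow> real list \<Rightarrow> bool list list" where
  "interval_array xs ys =
     map (\<lambda>x. map (\<lambda>j. of_int x \<in> {ys ! j <.. ys ! (j+1)}) [0..<length ys - 1]) xs"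

end

theory Submission
  imports Defs
begin

text \<open>
  Both walks are uniformized at the common rate L = m + n + 1 by Poisson thinning, so that their
  laws at time t become Poisson(L t)-mixtures of powers of lazy one-step kernels. A duality
  between two one-step kernels then passes to all their powers, by swapping the order of the two
  independent randomizations. The one-step duality is an identity of generators: moving the
  absorbed cluster at p by d changes the interval array exactly as moving the reflected particle
  at p + d/2 by -d does, and (p, d) \<mapsto> (p + d/2, -d) matches the possible moves of the two
  walks bijectively.
\<close>

definition lazy_kernel :: "real \<Rightarrow> ('s \<Rightarrow> 's pmf) \<Rightarrow> 's \<Rightarrow> 's pmf" where
  "lazy_kernel p K x = bind_pmf (bernoulli_pmf p) (\<lambda>b. if b then K x else return_pmf x)"

lemma kernel_power_Suc_right: "kernel_power K (Suc k) s = bind_pmf (kernel_power K k s) K"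
proof (induction k arbitrary: s)
  case 0
  have "kernel_power K 0 = return_pmf" by (rule ext) simp
  then show ?case by (simp add: bind_return_pmf bind_return_pmf')
next
  case (Suc k)
  have "kernel_power K (Suc (Suc k)) s = bind_pmf (K s) (\<lambda>s'. bind_pmf (kernel_power K k s') K)"
    by (simp only: kernel_power.simps) (intro bind_pmf_cong refl Suc.IH)
  then show ?case by (simp add: bind_assoc_pmf)
qed

lemma kernel_power_lazy_kernel:
  assumes "0 \<le> p" "p \<le> 1"
  shows "kernel_power (lazy_kernel p K) k x = bind_pmf (binomial_pmf k p) (\<lambda>j. kernel_power K j x)"
proof (induction k arbitrary: x)
  case 0
  show ?case using assms by (simp add: binomial_pmf_0 bind_return_pmf)
next
  case (Suc k)
  have "kernel_power (lazy_kernel p K) (Suc k) x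
      = bind_pmf (lazy_kernel p K x) (\<lambda>x'. bind_pmf (binomial_pmf k p) (\<lambda>j. kernel_power K j x'))"
    by (simp only: kernel_power.simps) (intro bind_pmf_cong refl Suc.IH)
  also have "\<dots> = bind_pmf (bernoulli_pmf p) (\<lambda>b. bind_pmf (binomial_pmf k p)
          (\<lambda>j. kernel_power K ((if b then 1 else 0) + j) x))"
    unfolding lazy_kernel_def bind_assoc_pmf
  proof (rule bind_pmf_cong[OF refl])
    fix b
    show "(if b then K x else return_pmf x) \<bind> (\<lambda>x'. binomial_pmf k p \<bind> (\<lambda>j. kernel_power K j x'))
        = binomial_pmf k p \<bind> (\<lambda>j. kernel_power K ((if b then 1 else 0) + j) x)"
      by (cases b) (simp_all add: bind_return_pmf bind_commute_pmf[of "K x"])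
  qed
  also have "\<dots> = bind_pmf (binomial_pmf (Suc k) p) (\<lambda>j. kernel_power K j x)"
    using assms by (simp add: binomial_pmf_Suc bind_assoc_pmf bind_return_pmf)
  finally show ?case .
qed

lemma bind_poisson_binomial_pmf:
  assumes lam: "0 < lam" and p: "0 < p" "p \<le> 1"
  shows "bind_pmf (poisson_pmf lam) (\<lambda>k. binomial_pmf k p) = poisson_pmf (p * lam)"
proof (rule pmf_eqI)
  fix j
  define f where "f k = lam ^ k / fact k * exp (-lam) * (real (k choose j) * p ^ j * (1 - p) ^ (k - j))" for k
  have f_nonneg: "0 \<le> f k" for k
    using lam p by (simp add: f_def)
  have f_shift: "f (i + j) = (exp (-lam) * (p * lam) ^ j / fact j) * (((1 - p) * lam) ^ i /\<^sub>R fact i)" for i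
  proof -
    have "real ((i + j) choose j) = fact (i + j) / (fact j * fact i)"
      by (subst binomial_fact) auto
    moreover have "(lam - lam * p) ^ i = lam ^ i * (1 - p) ^ i"
      unfolding power_mult_distrib[symmetric] by (simp add: algebra_simps)
    ultimately show ?thesis
      unfolding f_def by (simp add: field_simps power_add power_mult_distrib)
  qed
  have "exp (-lam) * exp ((1 - p) * lam) = exp (- (p * lam))"
    unfolding mult_exp_exp by (simp add: algebra_simps)
  then have limit: "(exp (-lam) * (p * lam) ^ j / fact j) * exp ((1 - p) * lam)
      = (p * lam) ^ j / fact j * exp (- (p * lam))"
    by (metis mult.commute mult.left_commute times_divide_eq_right)
  have "(\<lambda>i. f (i + j)) sums ((p * lam) ^ j / fact j * exp (- (p * lam)))"
    unfolding f_shift limit[symmetric] by (intro sums_mult exp_converges)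
  then have f_sums: "f sums ((p * lam) ^ j / fact j * exp (- (p * lam)))"
    by (subst (asm) sums_zero_iff_shift) (auto simp: f_def)
  have "ennreal (pmf (bind_pmf (poisson_pmf lam) (\<lambda>k. binomial_pmf k p)) j)
      = (\<integral>\<^sup>+k. ennreal (pmf (poisson_pmf lam) k) * ennreal (pmf (binomial_pmf k p) j) \<partial>count_space UNIV)"
    by (simp add: ennreal_pmf_bind nn_integral_measure_pmf)
  also have "\<dots> = (\<Sum>k. ennreal (f k))"
    using lam p by (simp add: nn_integral_count_space_nat f_def ennreal_mult'[symmetric])
  also have "\<dots> = ennreal (pmf (poisson_pmf (p * lam)) j)"
    using lam p by (simp add: suminf_ennreal_eq[OF f_nonneg f_sums])
  finally show "pmf (bind_pmf (poisson_pmf lam) (\<lambda>k. binomial_pmf k p)) j = pmf (poisson_pmf (p * lam)) j"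
    by simp
qed

lemma uniformized_law_lazy_kernel:
  assumes "0 \<le> l" "l \<le> L" "0 < L"
  shows "uniformized_law l K t x = uniformized_law L (lazy_kernel (l / L) K) t x"
proof -
  have p: "0 \<le> l / L" "l / L \<le> 1"
    using assms by auto
  consider "t \<le> 0" | "0 < t" "l = 0" | "0 < t" "0 < l"
    using assms by linarith
  then show ?thesis
  proof cases
    case 1
    then show ?thesis
      using assms mult_nonneg_nonpos[of l t] mult_nonneg_nonpos[of L t]
      by (simp add: uniformized_law_def)
  next
    case 2
    have "binomial_pmf k 0 = return_pmf 0" for k
      by (simp flip: set_pmf_subset_singleton)
    with 2 assms show ?thesis
      by (simp add: uniformized_law_def kernel_power_lazy_kernel bind_return_pmf bind_pmf_const)
  next
    case 3
    have "uniformized_law L (lazy_kernel (l / L) K) t x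
        = bind_pmf (bind_pmf (poisson_pmf (L * t)) (\<lambda>k. binomial_pmf k (l / L))) (\<lambda>j. kernel_power K j x)"
      using 3 assms by (simp add: uniformized_law_def kernel_power_lazy_kernel[OF p] bind_assoc_pmf)
    also have "bind_pmf (poisson_pmf (L * t)) (\<lambda>k. binomial_pmf k (l / L)) = poisson_pmf (l * t)"
      using 3 assms by (subst bind_poisson_binomial_pmf) auto
    finally show ?thesis
      using 3 by (simp add: uniformized_law_def)
  qed
qed

lemma set_pmf_kernel_power_subset:
  assumes "\<And>x. x \<in> S \<Longrightarrow> set_pmf (K x) \<subseteq> S" "x \<in> S"
  shows "set_pmf (kernel_power K k x) \<subseteq> S"
  using assms(2) by (induction k arbitrary: x) (auto dest: assms(1))

lemma map_pmf_kernel_power_duality: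
  assumes inv_K: "\<And>x. x \<in> S \<Longrightarrow> set_pmf (K x) \<subseteq> S"
    and inv_M: "\<And>y. y \<in> T \<Longrightarrow> set_pmf (M y) \<subseteq> T"
    and dual: "\<And>x y. x \<in> S \<Longrightarrow> y \<in> T \<Longrightarrow>
      map_pmf (\<lambda>x'. H x' y) (K x) = map_pmf (\<lambda>y'. H x y') (M y)"
    and "x \<in> S" "y \<in> T"
  shows "map_pmf (\<lambda>x'. H x' y) (kernel_power K k x) = map_pmf (\<lambda>y'. H x y') (kernel_power M k y)"
  using \<open>x \<in> S\<close> \<open>y \<in> T\<close>
proof (induction k arbitrary: x y)
  case 0
  then show ?case by simp
next
  case (Suc k)
  have "map_pmf (\<lambda>x'. H x' y) (kernel_power K (Suc k) x)
      = bind_pmf (K x) (\<lambda>x1. map_pmf (\<lambda>y'. H x1 y') (kernel_power M k y))"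
    using Suc inv_K by (auto simp: map_bind_pmf intro!: bind_pmf_cong)
  also have "\<dots> = bind_pmf (kernel_power M k y) (\<lambda>y1. map_pmf (\<lambda>x'. H x' y1) (K x))"
    unfolding map_pmf_def by (rule bind_commute_pmf)
  also have "\<dots> = bind_pmf (kernel_power M k y) (\<lambda>y1. map_pmf (\<lambda>y'. H x y') (M y1))"
    using Suc.prems set_pmf_kernel_power_subset[of T M, OF inv_M]
    by (intro bind_pmf_cong refl dual) auto
  also have "\<dots> = map_pmf (\<lambda>y'. H x y') (kernel_power M (Suc k) y)"
    by (simp only: kernel_power_Suc_right map_bind_pmf)
  finally show ?case .
qed

lemma map_pmf_uniformized_law_duality:
  assumes "\<And>x. x \<in> S \<Longrightarrow> set_pmf (K x) \<subseteq> S"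
    and "\<And>y. y \<in> T \<Longrightarrow> set_pmf (M y) \<subseteq> T"
    and "\<And>x y. x \<in> S \<Longrightarrow> y \<in> T \<Longrightarrow>
      map_pmf (\<lambda>x'. H x' y) (K x) = map_pmf (\<lambda>y'. H x y') (M y)"
    and "x \<in> S" "y \<in> T"
  shows "map_pmf (\<lambda>x'. H x' y) (uniformized_law L K t x)
       = map_pmf (\<lambda>y'. H x y') (uniformized_law L M t y)"
  unfolding uniformized_law_def
  using map_pmf_kernel_power_duality[OF assms]
  by (auto simp: map_bind_pmf intro!: bind_pmf_cong)

lemma bij_betw_nth_cluster_leader:
  "bij_betw (nth X) {i. i < length X \<and> cluster_leader X i} (set X)"
proof (rule bij_betw_imageI)
  show "inj_on (nth X) {i. i < length X \<and> cluster_leader X i}"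
  proof (rule inj_onI)
    fix i j
    assume "i \<in> {i. i < length X \<and> cluster_leader X i}" "j \<in> {i. i < length X \<and> cluster_leader X i}"
      and "X ! i = X ! j"
    then show "i = j"
      by (cases i j rule: linorder_cases) (auto simp: cluster_leader_def)
  qed
  have "p \<in> nth X ` {i. i < length X \<and> cluster_leader X i}" if "p \<in> set X" for p
  proof -
    define i where "i = (LEAST i. i < length X \<and> X ! i = p)"
    have i: "i < length X \<and> X ! i = p"
      unfolding i_def by (rule LeastI_ex) (use that in \<open>auto simp: in_set_conv_nth\<close>)
    have "cluster_leader X i"
      unfolding cluster_leader_def
    proof (intro allI impI)
      fix j assume "j < i"
      then have "\<not> (j < length X \<and> X ! j = p)"
        unfolding i_def by (rule not_less_Least)
      with i \<open>j < i\<close> show "X ! j \<noteq> X ! i" by auto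
    qed
    with i show ?thesis by (intro image_eqI[of _ _ i]) auto
  qed
  then show "nth X ` {i. i < length X \<and> cluster_leader X i} = set X"
    by auto
qed

lemma sum_cluster_leaders:
  "(\<Sum>i | i < length X \<and> cluster_leader X i. f (X ! i)) = (\<Sum>p\<in>set X. f p)"
  using sum.reindex_bij_betw[OF bij_betw_nth_cluster_leader] .

definition crw_generator :: "('a \<Rightarrow> int \<Rightarrow> 'a) \<Rightarrow> ('a list \<Rightarrow> real) \<Rightarrow> 'a list \<Rightarrow> real" where
  "crw_generator jump h X =
     (\<Sum>p\<in>set X. \<Sum>d\<in>{-1, 1}. h (map (\<lambda>z. if z = p then jump p d else z) X) - h X) / 2"

lemma pmf_map_crw_step:
  "real (length X) * pmf (map_pmf f (crw_step jump X)) z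
     = real (length X) * indicator {z} (f X) + crw_generator jump (\<lambda>X'. indicator {z} (f X')) X"
proof (cases "X = []")
  case True
  then show ?thesis by (simp add: crw_generator_def)
next
  case False
  define g :: "'a list \<Rightarrow> real" where "g = (\<lambda>X'. indicator {z} (f X'))"
  define move where
    "move i d = (if cluster_leader X i then move_cluster X i (jump (X ! i) d) else X)" for i d
  have "real (length X) * pmf (map_pmf f (crw_step jump X)) z
      = (\<Sum>i\<in>{0..<length X}. \<Sum>d\<in>{-1, 1::int}. g (move i d)) / 2"
    using False unfolding crw_step_def move_def g_def
    by (simp add: map_bind_pmf pmf_bind integral_pmf_of_set sum_divide_distrib[symmetric])
  also have "(\<Sum>i\<in>{0..<length X}. \<Sum>d\<in>{-1, 1::int}. g (move i d))
      = (\<Sum>i\<in>{0..<length X}. \<Sum>d\<in>{-1, 1::int}. g (move i d) - g X) + 2 * real (length X) * g X"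
    by (simp add: sum_subtractf sum.distrib)
  also have "(\<Sum>i\<in>{0..<length X}. \<Sum>d\<in>{-1, 1::int}. g (move i d) - g X)
      = (\<Sum>i | i < length X \<and> cluster_leader X i. \<Sum>d\<in>{-1, 1::int}. g (move i d) - g X)"
    by (rule sum.mono_neutral_right) (auto simp: move_def)
  also have "\<dots> = 2 * crw_generator jump g X"
    unfolding crw_generator_def sum_cluster_leaders[symmetric]
    by (auto simp: move_def move_cluster_def intro!: sum.cong)
  finally show ?thesis
    by (simp add: g_def)
qed

lemma pmf_map_lazy_kernel:
  assumes "0 \<le> p" "p \<le> 1"
  shows "pmf (map_pmf f (lazy_kernel p K x)) z = p * pmf (map_pmf f (K x)) z + (1 - p) * indicator {z} (f x)"
  using assms unfolding lazy_kernel_def by (simp add: map_bind_pmf pmf_bind)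

lemma pmf_map_lazy_crw_step:
  assumes "real (length X) \<le> L"
  shows "pmf (map_pmf f (lazy_kernel (real (length X) / L) (crw_step jump) X)) z
       = indicator {z} (f X) + crw_generator jump (\<lambda>X'. indicator {z} (f X')) X / L"
proof (cases "X = []")
  case True
  then show ?thesis by (simp add: crw_generator_def pmf_map_lazy_kernel)
next
  case False
  then have "0 < L"
    using assms by (metis length_greater_0_conv of_nat_0_less_iff order_less_le_trans)
  then show ?thesis
    using assms pmf_map_crw_step[of X f jump z]
    by (simp add: pmf_map_lazy_kernel field_simps)
qed

lemma set_pmf_lazy_crw_step:
  assumes "\<And>y d. P y \<Longrightarrow> P (jump y d)" "\<forall>z\<in>set X. P z"
  shows "set_pmf (lazy_kernel p (crw_step jump) X) \<subseteq> {X'. length X' = length X \<and> (\<forall>z\<in>set X'. P z)}"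
  using assms
  by (auto simp: lazy_kernel_def crw_step_def set_bind_pmf move_cluster_def split: if_splits)

lemma reflected_jump_minus_half_in_Ints:
  assumes "y - 1/2 \<in> \<int>"
  shows "reflected_jump a b y d - 1/2 \<in> \<int>"
proof -
  have "y + of_int d - 1/2 \<in> \<int>"
    using Ints_add[OF assms Ints_of_int[of d]] by (simp add: algebra_simps)
  with assms show ?thesis
    by (simp add: reflected_jump_def Let_def)
qed

lemma half_int_less_of_int_iff: "of_int k + 1/2 < (of_int z :: real) \<longleftrightarrow> k < z"
proof -
  have "\<lfloor>of_int k + 1/2 :: real\<rfloor> = k" by linarith
  then show ?thesis by (metis floor_less_iff)
qed

lemma reflected_jump_half_int:
  "reflected_jump a b (of_int k + 1/2) d
     = of_int (if (k < a) \<noteq> (k + d < a) \<or> (k < b) \<noteq> (k + d < b) then k else k + d) + 1/2"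
proof -
  have "of_int k + 1/2 + of_int d = (of_int (k + d) + 1/2 :: real)" by simp
  then show ?thesis
    unfolding reflected_jump_def Let_def by (simp only: half_int_less_of_int_iff) auto
qed

lemma half_int_less_absorbed_move_iff:
  fixes x p :: int and y :: real
  assumes d: "d \<in> {-1, 1}" and y: "y - 1/2 \<in> \<int>"
  shows "y < of_int (if x = p then absorbed_jump a b p d else x)
     \<longleftrightarrow> (if y = of_int p + of_int d / 2 then reflected_jump a b y (-d) else y) < of_int x"
proof -
  obtain k where k: "y = of_int k + 1/2"
    using y by (metis Ints_cases diff_add_cancel)
  have "y = of_int p + of_int d / 2 \<longleftrightarrow> (d = 1 \<and> k = p) \<or> (d = -1 \<and> k = p - 1)"
    using d unfolding k by (auto simp: field_simps)
  then have reflected: "(if y = of_int p + of_int d / 2 then reflected_jump a b y (-d) else y)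
      = of_int (if (d = 1 \<and> k = p) \<or> (d = -1 \<and> k = p - 1)
          then (if (k < a) \<noteq> (k - d < a) \<or> (k < b) \<noteq> (k - d < b) then k else k - d)
          else k) + 1/2"
    unfolding k by (simp add: reflected_jump_half_int)
  have absorbed: "k < (if x = p then absorbed_jump a b p d else x)
      \<longleftrightarrow> (if (d = 1 \<and> k = p) \<or> (d = -1 \<and> k = p - 1)
          then (if (k < a) \<noteq> (k - d < a) \<or> (k < b) \<noteq> (k - d < b) then k else k - d)
          else k) < x"
    using d unfolding absorbed_jump_def by auto
  show ?thesis
    unfolding reflected unfolding k half_int_less_of_int_iff by (rule absorbed)
qed

lemma interval_array_absorbed_move:
  fixes X :: "int list" and Y :: "real list" and p d :: int
  assumes d: "d \<in> {-1, 1}" and Y: "\<forall>y\<in>set Y. y - 1/2 \<in> \<int>"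
  defines "q \<equiv> of_int p + of_int d / 2"
  shows "interval_array (map (\<lambda>z. if z = p then absorbed_jump a b p d else z) X) Y
       = interval_array X (map (\<lambda>w. if w = q then reflected_jump a b q (-d) else w) Y)"
proof -
  have move: "y < of_int (if x = p then absorbed_jump a b p d else x)
      \<longleftrightarrow> (if y = q then reflected_jump a b q (-d) else y) < of_int x"
    if "y \<in> set Y" for x y
  proof -
    have "(if y = q then reflected_jump a b q (-d) else y) = (if y = q then reflected_jump a b y (-d) else y)"
      by simp
    with that Y show ?thesis
      unfolding q_def by (simp add: half_int_less_absorbed_move_iff[OF d])
  qed
  show ?thesis
    unfolding interval_array_def length_map map_map o_def
  proof (intro map_cong refl)
    fix x j assume "j \<in> set [0..<length Y - 1]"
    then have j: "j < length Y" "j + 1 < length Y" by auto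
    show "(of_int (if x = p then absorbed_jump a b p d else x) \<in> {Y ! j<..Y ! (j + 1)})
      = (of_int x \<in> {map (\<lambda>w. if w = q then reflected_jump a b q (-d) else w) Y ! j<..
             map (\<lambda>w. if w = q then reflected_jump a b q (-d) else w) Y ! (j + 1)})"
      unfolding greaterThanAtMost_iff nth_map[OF j(1)] nth_map[OF j(2)] not_less[symmetric]
        move[OF nth_mem[OF j(1)]] move[OF nth_mem[OF j(2)]] by simp
  qed
qed

lemma sum_int_moves_eq_sum_half_int_moves:
  fixes A :: "int set" and B :: "real set"
    and F :: "int \<times> int \<Rightarrow> 'c::comm_monoid_add" and G :: "real \<times> int \<Rightarrow> 'c"
  assumes fin: "finite A" "finite B"
    and B: "\<forall>q\<in>B. q - 1/2 \<in> \<int>"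
    and FG: "\<And>p d. d \<in> {-1, 1} \<Longrightarrow> G (of_int p + of_int d / 2, - d) = F (p, d)"
    and F_zero: "\<And>p d. p \<notin> A \<Longrightarrow> F (p, d) = 0"
    and G_zero: "\<And>q e. q \<notin> B \<Longrightarrow> G (q, e) = 0"
  shows "(\<Sum>pd\<in>A \<times> {-1, 1}. F pd) = (\<Sum>qe\<in>B \<times> {-1, 1}. G qe)"
proof -
  define D where "D = {-1, 1 :: int}"
  define \<tau> :: "int \<times> int \<Rightarrow> real \<times> int" where "\<tau> = (\<lambda>(p, d). (of_int p + of_int d / 2, - d))"
  define \<sigma> :: "real \<times> int \<Rightarrow> int \<times> int" where "\<sigma> = (\<lambda>(q, e). (\<lfloor>q + of_int e / 2\<rfloor>, - e))"
  have FG': "G (\<tau> pd) = F pd" if "snd pd \<in> D" for pd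
  proof (cases pd)
    case (Pair p d)
    with that FG[of d p] show ?thesis by (simp add: D_def \<tau>_def)
  qed
  have \<sigma>_\<tau>: "\<sigma> (\<tau> pd) = pd" for pd
    by (auto simp: \<sigma>_def \<tau>_def split: prod.split)
  have \<tau>_\<sigma>: "\<tau> (\<sigma> qe) = qe" if qe_mem: "qe \<in> B \<times> D" for qe
  proof -
    obtain q e where qe: "qe = (q, e)" "q \<in> B" "e \<in> D"
      using qe_mem by blast
    then have "q + of_int e / 2 \<in> \<int>"
      using Ints_add[OF bspec[OF B \<open>q \<in> B\<close>], of "of_int e / 2 + 1/2"]
      by (auto simp: D_def algebra_simps)
    then show ?thesis
      using qe by (auto simp: \<sigma>_def \<tau>_def elim!: Ints_cases)
  qed
  have \<tau>_D: "snd (\<tau> pd) \<in> D" if "snd pd \<in> D" for pd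
    using that by (auto simp: D_def \<tau>_def split: prod.split)
  have \<sigma>_D: "snd (\<sigma> qe) \<in> D" if "snd qe \<in> D" for qe
    using that by (auto simp: D_def \<sigma>_def split: prod.split)
  have "(\<Sum>pd\<in>A \<times> D. F pd) = (\<Sum>qe\<in>B \<times> D. G qe)"
  proof (rule sum.reindex_bij_witness_not_neutral
      [of "{pd \<in> A \<times> D. \<tau> pd \<notin> B \<times> D}" "{qe \<in> B \<times> D. \<sigma> qe \<notin> A \<times> D}" _ \<sigma> \<tau>])
    show "F pd = 0" if "pd \<in> {pd \<in> A \<times> D. \<tau> pd \<notin> B \<times> D}" for pd
      using that FG'[of pd] G_zero[of "fst (\<tau> pd)" "snd (\<tau> pd)"] \<tau>_D[of pd] by (auto simp: mem_Times_iff)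
    show "G qe = 0" if "qe \<in> {qe \<in> B \<times> D. \<sigma> qe \<notin> A \<times> D}" for qe
      using that FG'[of "\<sigma> qe"] F_zero[of "fst (\<sigma> qe)" "snd (\<sigma> qe)"] \<tau>_\<sigma>[of qe] \<sigma>_D[of qe]
      by (auto simp: mem_Times_iff)
  qed (use fin FG' \<sigma>_\<tau> \<tau>_\<sigma> in \<open>auto simp: D_def\<close>)
  then show ?thesis
    unfolding D_def .
qed

lemma crw_generator_interval_array_duality:
  fixes X :: "int list" and Y :: "real list" and h :: "bool list list \<Rightarrow> real"
  assumes Y: "\<forall>y\<in>set Y. y - 1/2 \<in> \<int>"
  shows "crw_generator (absorbed_jump a b) (\<lambda>X'. h (interval_array X' Y)) X
       = crw_generator (reflected_jump a b) (\<lambda>Y'. h (interval_array X Y')) Y"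
proof -
  define F where "F = (\<lambda>(p, d). h (interval_array (map (\<lambda>z. if z = p then absorbed_jump a b p d else z) X) Y)
      - h (interval_array X Y))"
  define G where "G = (\<lambda>(q, e). h (interval_array X (map (\<lambda>w. if w = q then reflected_jump a b q e else w) Y))
      - h (interval_array X Y))"
  have "(\<Sum>pd\<in>set X \<times> {-1, 1}. F pd) = (\<Sum>qe\<in>set Y \<times> {-1, 1}. G qe)"
  proof (rule sum_int_moves_eq_sum_half_int_moves[OF finite_set finite_set Y])
    show "G (of_int p + of_int d / 2, - d) = F (p, d)" if "d \<in> {-1, 1}" for p d
      using interval_array_absorbed_move[OF that Y] by (simp add: F_def G_def)
    show "F (p, d) = 0" if "p \<notin> set X" for p d
    proof -
      have "map (\<lambda>z. if z = p then absorbed_jump a b p d else z) X = X"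
        using that by (intro map_idI) auto
      then show ?thesis by (simp add: F_def)
    qed
    show "G (q, e) = 0" if "q \<notin> set Y" for q e
    proof -
      have "map (\<lambda>w. if w = q then reflected_jump a b q e else w) Y = Y"
        using that by (intro map_idI) auto
      then show ?thesis by (simp add: G_def)
    qed
  qed
  then show ?thesis
    unfolding crw_generator_def F_def G_def sum.cartesian_product by simp
qed

lemma map_pmf_lazy_crw_step_duality:
  fixes X :: "int list" and Y :: "real list"
  assumes Y: "\<forall>y\<in>set Y. y - 1/2 \<in> \<int>"
    and L: "real (length X) \<le> L" "real (length Y) \<le> L"
  shows "map_pmf (\<lambda>X'. interval_array X' Y) (lazy_kernel (real (length X) / L) (crw_step (absorbed_jump a b)) X)
       = map_pmf (\<lambda>Y'. interval_array X Y') (lazy_kernel (real (length Y) / L) (crw_step (reflected_jump a b)) Y)"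
proof (rule pmf_eqI)
  fix z
  show "pmf (map_pmf (\<lambda>X'. interval_array X' Y) (lazy_kernel (real (length X) / L) (crw_step (absorbed_jump a b)) X)) z
      = pmf (map_pmf (\<lambda>Y'. interval_array X Y') (lazy_kernel (real (length Y) / L) (crw_step (reflected_jump a b)) Y)) z"
    unfolding pmf_map_lazy_crw_step[OF L(1)] pmf_map_lazy_crw_step[OF L(2)]
      crw_generator_interval_array_duality[OF Y, where h = "indicator {z}"] ..
qed

theorem proposition3p1:
  fixes a b :: int and xs :: "int list" and ys :: "real list" and t :: real
  assumes "a < b"
    and "sorted xs"
    and "sorted ys"
    and "\<forall>y\<in>set ys. y - 1/2 \<in> \<int>"
    and "0 \<le> t"
  shows "map_pmf (\<lambda>X. interval_array X ys) (absorbed_crw_law a b t xs)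
       = map_pmf (\<lambda>Y. interval_array xs Y) (reflected_crw_law a b t ys)"
proof -
  define L where "L = real (length xs + length ys + 1)"
  define K1 where "K1 = lazy_kernel (real (length xs) / L) (crw_step (absorbed_jump a b))"
  define K2 where "K2 = lazy_kernel (real (length ys) / L) (crw_step (reflected_jump a b))"
  define S1 where "S1 = {X :: int list. length X = length xs}"
  define S2 where "S2 = {Y :: real list. length Y = length ys \<and> (\<forall>y\<in>set Y. y - 1/2 \<in> \<int>)}"
  have "absorbed_crw_law a b t xs = uniformized_law L K1 t xs"
    unfolding absorbed_crw_law_def crw_law_def K1_def by (rule uniformized_law_lazy_kernel) (auto simp: L_def)
  moreover have "reflected_crw_law a b t ys = uniformized_law L K2 t ys"
    unfolding reflected_crw_law_def crw_law_def K2_def by (rule uniformized_law_lazy_kernel) (auto simp: L_def)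
  moreover have "map_pmf (\<lambda>X. interval_array X ys) (uniformized_law L K1 t xs)
      = map_pmf (\<lambda>Y. interval_array xs Y) (uniformized_law L K2 t ys)"
  proof (rule map_pmf_uniformized_law_duality[where S = S1 and T = S2])
    show "set_pmf (K1 X) \<subseteq> S1" if "X \<in> S1" for X
      using that set_pmf_lazy_crw_step[of "\<lambda>_. True" "absorbed_jump a b" X] by (auto simp: K1_def S1_def)
    show "set_pmf (K2 Y) \<subseteq> S2" if "Y \<in> S2" for Y
      using that set_pmf_lazy_crw_step[of "\<lambda>y. y - 1/2 \<in> \<int>" "reflected_jump a b" Y,
          OF reflected_jump_minus_half_in_Ints]
      by (auto simp: K2_def S2_def)
    show "map_pmf (\<lambda>X'. interval_array X' Y) (K1 X) = map_pmf (\<lambda>Y'. interval_array X Y') (K2 Y)"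
      if "X \<in> S1" "Y \<in> S2" for X Y
      using that map_pmf_lazy_crw_step_duality[of Y X L a b] by (simp add: K1_def K2_def S1_def S2_def L_def)
  qed (use assms(4) in \<open>auto simp: S1_def S2_def\<close>)
  ultimately show ?thesis
    by simp
qed

end
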